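(* Let $n\ge 3$ and let $f\colon (0,4]\to\mathbb R$ be a differentiable, decreasing, and convex function. Then the vertices of a regular simplex inscribed in the unit sphere $\mathbb S^{n-2}\subset\mathbb R^{n-1}$ (i.e. $n$ points with $\langle \mathbf x_i,\mathbf x_j\rangle=-\frac{1}{n-1}$ for all $i\neq j$) attain the minimum of the largest eigenvalue $\lambda_n(L^{\mathbf x})$ of the graph Laplacian $L^{\mathbf x}$ over all configurations $\{\mathbf x_i\}_{i=1}^n$ of $n$ distinct points on $\mathbb S^{n-2}$.
   Context: For points $\mathbf x_1,\dots,\mathbf x_n\in\mathbb S^{n-2}$, the weighted adjacency matrix $W^{\mathbf x}$ is the $n\times n$ matrix with $W^{\mathbf x}_{ij}=f(|\mathbf x_i-\mathbf x_j|^2)$ for $i\ne j$ (Euclidean distance) and $W^{\mathbf x}_{ii}=0$. Let $D^{\mathbf x}$ be diagonal with $D^{\mathbf x}_{ii}=\sum_j W^{\mathbf x}_{ij}$; the graph Laplacian is $L^{\mathbf x}=D^{\mathbf x}-W^{\mathbf x}$, with eigenvalues $\lambda_1(L^{\mathbf x})\le\dots\le\lambda_n(L^{\mathbf x})$, so $\lambda_n(L^{\mathbf x})=\max_{\|v\|=1}\langle v,L^{\mathbf x}v\rangle$. *)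

theory Defs
  imports "HOL-Analysis.Analysis"
begin

definition weight_matrix :: "(real \<Rightarrow> real) \<Rightarrow> ('n::finite \<Rightarrow> real^'d) \<Rightarrow> real^'n^'n" where
  "weight_matrix f x = (\<chi> i j. if i = j then 0 else f ((norm (x i - x j))\<^sup>2))"

definition degree_matrix :: "(real \<Rightarrow> real) \<Rightarrow> ('n::finite \<Rightarrow> real^'d) \<Rightarrow> real^'n^'n" where
  "degree_matrix f x = (\<chi> i j. if i = j then (\<Sum>k\<in>UNIV. weight_matrix f x $ i $ k) else 0)"

definition graph_laplacian :: "(real \<Rightarrow> real) \<Rightarrow> ('n::finite \<Rightarrow> real^'d) \<Rightarrow> real^'n^'n" where
  "graph_laplacian f x = degree_matrix f x - weight_matrix f x"

definition real_eigenvalues :: "real^'n^'n \<Rightarrow> real set" where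
  "real_eigenvalues A = {c. \<exists>v. v \<noteq> 0 \<and> A *v v = c *\<^sub>R v}"

definition largest_eigenvalue :: "real^'n^'n \<Rightarrow> real" where
  "largest_eigenvalue A = Max (real_eigenvalues A)"

end

theory Submission
  imports Defs
begin

text \<open>
  The Laplacian L of any configuration is symmetric with zero row sums, so its largest eigenvalue
  \<lambda> is the maximum of the Rayleigh quotient and is nonnegative. Testing the Rayleigh bound on the
  vectors e_a - e_b and summing over all pairs gives trace L \<le> (n - 1) \<lambda>, and the trace is the sum
  of all weights f(|x_i - x_j|^2). Since the squared distances of n unit vectors sum to at most 2n^2,
  the supporting line of the convex decreasing f at d = 2n/(n-1) bounds this sum below by
  n(n-1) f(d). For the regular simplex all off-diagonal weights equal f(d), so its Laplacian has
  only the eigenvalues 0 and n f(d), both of which are at most \<lambda>.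
\<close>

lemma symmetric_matrix_inner_commute:
  fixes A :: "real^'n::finite^'n"
  assumes "transpose A = A"
  shows "(A *v u) \<bullet> w = u \<bullet> (A *v w)"
  by (metis assms dot_lmul_matrix vector_transpose_matrix)

lemma finite_real_eigenvalues_symmetric:
  fixes A :: "real^'n::finite^'n"
  assumes sym: "transpose A = A"
  shows "finite (real_eigenvalues A)"
proof -
  let ?S = "real_eigenvalues A"
  define v where "v = (\<lambda>c. SOME u. u \<noteq> 0 \<and> A *v u = c *\<^sub>R u)"
  have v: "v c \<noteq> 0 \<and> A *v v c = c *\<^sub>R v c" if "c \<in> ?S" for c
    using that unfolding v_def real_eigenvalues_def by (metis (mono_tags, lifting) mem_Collect_eq)
  have orth: "v c \<bullet> v d = 0" if "c \<in> ?S" "d \<in> ?S" "c \<noteq> d" for c d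
  proof -
    have "c * (v c \<bullet> v d) = (A *v v c) \<bullet> v d" using v[OF that(1)] by simp
    also have "\<dots> = v c \<bullet> (A *v v d)" by (rule symmetric_matrix_inner_commute[OF sym])
    also have "\<dots> = d * (v c \<bullet> v d)" using v[OF that(2)] by simp
    finally show ?thesis using that(3) by simp
  qed
  then have "inj_on v ?S"
    by (metis inj_onI inner_eq_zero_iff v)
  moreover have "independent (v ` ?S)"
    by (rule pairwise_orthogonal_independent) (use orth v in \<open>auto simp: pairwise_def orthogonal_def\<close>)
  ultimately show ?thesis
    using finiteI_independent finite_image_iff by metis
qed

lemma rayleigh_maximizer_is_eigenvector:
  fixes A :: "real^'n::finite^'n"
  assumes sym: "transpose A = A"
    and bound: "\<And>w. w \<bullet> (A *v w) \<le> M * (w \<bullet> w)"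
    and attained: "v \<bullet> (A *v v) = M * (v \<bullet> v)"
  shows "A *v v = M *\<^sub>R v"
proof -
  \<comment> \<open>The Rayleigh bound along v - t r, with r the residual, is a quadratic in t vanishing at 0.\<close>
  define r where "r = M *\<^sub>R v - A *v v"
  define K where "K = M * (r \<bullet> r) - r \<bullet> (A *v r)"
  have K: "0 \<le> K" using bound[of r] by (simp add: K_def)
  have Avr: "(A *v v) \<bullet> r = M * (v \<bullet> r) - r \<bullet> r"
    by (simp add: r_def inner_diff_left)
  have small: "2 * (r \<bullet> r) \<le> t * K" if "0 < t" for t
  proof -
    have "v \<bullet> (A *v r) = (A *v v) \<bullet> r" "r \<bullet> (A *v v) = (A *v v) \<bullet> r"
      by (simp add: symmetric_matrix_inner_commute[OF sym]) (rule inner_commute)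
    then have q: "(v - t *\<^sub>R r) \<bullet> (A *v (v - t *\<^sub>R r))
        = v \<bullet> (A *v v) - 2 * t * ((A *v v) \<bullet> r) + t\<^sup>2 * (r \<bullet> (A *v r))"
      by (simp add: matrix_vector_mult_diff_distrib matrix_vector_mult_scaleR inner_diff_left inner_diff_right
          power2_eq_square right_diff_distrib)
    have n: "(v - t *\<^sub>R r) \<bullet> (v - t *\<^sub>R r) = v \<bullet> v - 2 * t * (v \<bullet> r) + t\<^sup>2 * (r \<bullet> r)"
      by (simp add: inner_diff_left inner_diff_right inner_commute[of r v] power2_eq_square
          right_diff_distrib)
    have "0 \<le> M * ((v - t *\<^sub>R r) \<bullet> (v - t *\<^sub>R r)) - (v - t *\<^sub>R r) \<bullet> (A *v (v - t *\<^sub>R r))"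
      using bound[of "v - t *\<^sub>R r"] by simp
    also have "\<dots> = t * (t * K - 2 * (r \<bullet> r))"
      unfolding q n Avr attained K_def by (simp add: algebra_simps power2_eq_square)
    finally show ?thesis
      using that by (simp add: zero_le_mult_iff)
  qed
  have "2 * (r \<bullet> r) \<le> 0"
  proof (rule field_le_epsilon)
    fix e :: real assume "0 < e"
    then have "e / (K + 1) * K \<le> e"
      using K by (simp add: field_simps)
    with small[of "e / (K + 1)"] \<open>0 < e\<close> K show "2 * (r \<bullet> r) \<le> 0 + e"
      by simp
  qed
  then have "r = 0"
    by (metis inner_eq_zero_iff inner_ge_zero order_antisym mult_le_0_iff zero_less_numeral not_le)
  then show ?thesis
    by (metis r_def eq_iff_diff_eq_0)
qed

lemma symmetric_matrix_rayleigh_max: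
  fixes A :: "real^'n::finite^'n"
  assumes sym: "transpose A = A"
  shows "\<exists>M\<in>real_eigenvalues A. \<forall>w. w \<bullet> (A *v w) \<le> M * (w \<bullet> w)"
proof -
  let ?q = "\<lambda>w. w \<bullet> (A *v w)"
  have "continuous_on (sphere 0 1) ?q"
    by (intro continuous_intros linear_continuous_on matrix_vector_mul_linear)
  moreover have "sphere (0::real^'n) 1 \<noteq> {}"
    by (metis norm_Basis ex_in_conv mem_sphere_0 nonempty_Basis)
  ultimately obtain v where v: "v \<in> sphere 0 1" and vmax: "\<And>w. w \<in> sphere 0 1 \<Longrightarrow> ?q w \<le> ?q v"
    using continuous_attains_sup[OF compact_sphere] by blast
  have vv: "v \<bullet> v = 1"
    using v by (simp add: dot_square_norm)
  have bound: "?q w \<le> ?q v * (w \<bullet> w)" for w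
  proof (cases "w = 0")
    case False
    have "?q w / (norm w)\<^sup>2 = ?q ((1 / norm w) *\<^sub>R w)"
      by (simp add: matrix_vector_mult_scaleR power2_eq_square)
    also have "\<dots> \<le> ?q v"
      using False by (intro vmax) simp
    finally show ?thesis
      using False by (simp add: dot_square_norm divide_le_eq mult.commute)
  qed simp
  have "A *v v = ?q v *\<^sub>R v"
    by (rule rayleigh_maximizer_is_eigenvector[OF sym bound]) (simp add: vv)
  moreover have "v \<noteq> 0"
    using v by auto
  ultimately have "?q v \<in> real_eigenvalues A"
    unfolding real_eigenvalues_def by blast
  with bound show ?thesis
    by blast
qed

lemma real_eigenvalue_le_rayleigh_bound:
  fixes A :: "real^'n::finite^'n"
  assumes bound: "\<And>w. w \<bullet> (A *v w) \<le> M * (w \<bullet> w)"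
    and "c \<in> real_eigenvalues A"
  shows "c \<le> M"
proof -
  obtain u where u: "u \<noteq> 0" "A *v u = c *\<^sub>R u"
    using assms(2) unfolding real_eigenvalues_def by blast
  have "c * (u \<bullet> u) = u \<bullet> (A *v u)"
    by (simp add: u(2))
  also have "\<dots> \<le> M * (u \<bullet> u)"
    by (rule bound)
  finally show ?thesis
    using u(1) by (simp add: mult_le_cancel_right_pos)
qed

lemma largest_eigenvalue_symmetric:
  fixes A :: "real^'n::finite^'n"
  assumes sym: "transpose A = A"
  shows "largest_eigenvalue A \<in> real_eigenvalues A"
    and "v \<bullet> (A *v v) \<le> largest_eigenvalue A * (v \<bullet> v)"
    and "\<mu> \<in> real_eigenvalues A \<Longrightarrow> \<mu> \<le> largest_eigenvalue A"
proof -
  obtain M where M: "M \<in> real_eigenvalues A" and bound: "\<And>w. w \<bullet> (A *v w) \<le> M * (w \<bullet> w)"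
    using symmetric_matrix_rayleigh_max[OF sym] by blast
  have "largest_eigenvalue A = M"
    unfolding largest_eigenvalue_def
    using finite_real_eigenvalues_symmetric[OF sym] real_eigenvalue_le_rayleigh_bound[OF bound] M
    by (rule Max_eqI)
  with M bound real_eigenvalue_le_rayleigh_bound[OF bound]
  show "largest_eigenvalue A \<in> real_eigenvalues A"
    and "v \<bullet> (A *v v) \<le> largest_eigenvalue A * (v \<bullet> v)"
    and "\<mu> \<in> real_eigenvalues A \<Longrightarrow> \<mu> \<le> largest_eigenvalue A"
    by simp_all
qed

lemma sum_off_diagonal_const:
  fixes a :: "'n::finite"
  shows "(\<Sum>k\<in>UNIV. if a = k then 0 else e) = (real CARD('n) - 1) * (e::real)"
proof -
  have "(\<Sum>k\<in>UNIV. if a = k then 0 else e) = (\<Sum>k\<in>UNIV. e - (if a = k then e else 0))"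
    by (intro sum.cong) auto
  then show ?thesis
    by (simp add: sum_subtractf algebra_simps)
qed

lemma inner_axis_diff_matrix_vector_mult:
  fixes A :: "real^'n::finite^'n"
  shows "(axis a 1 - axis b 1) \<bullet> (A *v (axis a 1 - axis b 1)) = A$a$a - A$a$b - A$b$a + A$b$b"
  by (simp add: matrix_vector_mult_diff_distrib matrix_vector_mult_basis inner_diff_left
      inner_diff_right inner_axis' column_def)

lemma inner_axis_diff_self:
  "(axis a 1 - axis b 1) \<bullet> (axis a 1 - axis b 1 :: real^'n::finite) = (if a = b then 0 else 2)"
  by (simp add: inner_diff_left inner_diff_right inner_axis_axis)

lemma trace_le_of_rayleigh_bound:
  fixes A :: "real^'n::finite^'n"
  assumes rows: "\<And>i. (\<Sum>j\<in>UNIV. A$i$j) = 0"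
    and bound: "\<And>w. w \<bullet> (A *v w) \<le> M * (w \<bullet> w)"
  shows "(\<Sum>i\<in>UNIV. A$i$i) \<le> (real CARD('n) - 1) * M"
proof -
  let ?n = "real CARD('n)"
  have "2 * ?n * (\<Sum>a\<in>UNIV. A$a$a) = (\<Sum>a\<in>UNIV. \<Sum>b\<in>UNIV. A$a$a - A$a$b - A$b$a + A$b$b)"
  proof -
    have "(\<Sum>a\<in>UNIV. \<Sum>b\<in>UNIV. A$b$a) = (\<Sum>b\<in>UNIV. \<Sum>a\<in>UNIV. A$b$a)"
      by (rule sum.swap)
    then show ?thesis
      using rows by (simp add: sum.distrib sum_subtractf sum_distrib_left[symmetric])
  qed
  also have "\<dots> \<le> (\<Sum>a::'n\<in>UNIV. \<Sum>b\<in>UNIV. if a = b then 0 else 2 * M)"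
  proof (rule sum_mono, rule sum_mono)
    fix a b :: 'n
    show "A$a$a - A$a$b - A$b$a + A$b$b \<le> (if a = b then 0 else 2 * M)"
      using bound[of "axis a 1 - axis b 1"]
      unfolding inner_axis_diff_matrix_vector_mult inner_axis_diff_self by (simp split: if_split_asm)
  qed
  also have "\<dots> = 2 * ?n * ((?n - 1) * M)"
    by (simp add: sum_off_diagonal_const)
  finally show ?thesis
    by simp
qed

lemma graph_laplacian_nth:
  "graph_laplacian f y $ i $ j =
     (if i = j then (\<Sum>k\<in>UNIV. weight_matrix f y $ i $ k) else 0) - weight_matrix f y $ i $ j"
  by (simp add: graph_laplacian_def degree_matrix_def)

lemma graph_laplacian_row_sum: "(\<Sum>j\<in>UNIV. graph_laplacian f y $ i $ j) = 0"
  by (simp add: graph_laplacian_nth sum_subtractf)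

lemma transpose_graph_laplacian: "transpose (graph_laplacian f y) = graph_laplacian f y"
  by (simp add: vec_eq_iff transpose_def graph_laplacian_nth weight_matrix_def norm_minus_commute)

lemma zero_in_real_eigenvalues_graph_laplacian: "0 \<in> real_eigenvalues (graph_laplacian f y)"
proof -
  have "graph_laplacian f y *v (\<chi> i. 1) = 0"
    by (simp add: matrix_vector_mult_def graph_laplacian_row_sum vec_eq_iff)
  moreover have "(\<chi> i. 1) \<noteq> (0 :: real^'n)"
    by (simp add: vec_eq_iff)
  ultimately show ?thesis
    unfolding real_eigenvalues_def by auto
qed

lemma sum_weights_le_largest_eigenvalue_graph_laplacian:
  fixes y :: "'n::finite \<Rightarrow> real^'d"
  shows "(\<Sum>i\<in>UNIV. \<Sum>k\<in>UNIV. weight_matrix f y $ i $ k)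
    \<le> (real CARD('n) - 1) * largest_eigenvalue (graph_laplacian f y)"
proof -
  have "(\<Sum>i\<in>UNIV. graph_laplacian f y $ i $ i) = (\<Sum>i\<in>UNIV. \<Sum>k\<in>UNIV. weight_matrix f y $ i $ k)"
    by (simp add: graph_laplacian_nth weight_matrix_def)
  with trace_le_of_rayleigh_bound[OF graph_laplacian_row_sum[of f y]
      largest_eigenvalue_symmetric(2)[OF transpose_graph_laplacian[of f y]]]
  show ?thesis
    by simp
qed

lemma real_eigenvalues_graph_laplacian_const_weight:
  fixes x :: "'n::finite \<Rightarrow> real^'d"
  assumes W: "\<And>i j. i \<noteq> j \<Longrightarrow> weight_matrix f x $ i $ j = c"
  shows "real_eigenvalues (graph_laplacian f x) \<subseteq> {0, real CARD('n) * c}"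
proof
  let ?n = "real CARD('n)"
  let ?L = "graph_laplacian f x"
  have Wd: "weight_matrix f x $ i $ j = (if i = j then 0 else c)" for i j
    using W by (simp add: weight_matrix_def)
  have L: "?L $ i $ j = (if i = j then ?n * c else 0) - c" for i j
    unfolding graph_laplacian_nth Wd sum_off_diagonal_const by (simp add: algebra_simps)
  have Lv: "(?L *v v) $ i = ?n * c * v $ i - c * (\<Sum>j\<in>UNIV. v $ j)" for v i
    unfolding matrix_vector_mult_def L
    by (simp add: left_diff_distrib sum_subtractf if_distrib[of "\<lambda>x. x * _"] sum_distrib_left
        cong: if_cong)
  fix \<mu> assume "\<mu> \<in> real_eigenvalues ?L"
  then obtain v where "v \<noteq> 0" and ev: "?L *v v = \<mu> *\<^sub>R v"
    unfolding real_eigenvalues_def by blast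
  let ?s = "\<Sum>j\<in>UNIV. v $ j"
  have comp: "\<mu> * v $ i = ?n * c * v $ i - c * ?s" for i
    using arg_cong[OF ev, of "\<lambda>u. u $ i"] unfolding Lv by simp
  have "\<mu> * ?s = (\<Sum>i\<in>UNIV. ?n * c * v $ i - c * ?s)"
    by (simp add: sum_distrib_left comp)
  also have "\<dots> = 0"
    by (simp add: sum_subtractf sum_distrib_left[symmetric])
  finally have "\<mu> = 0 \<or> ?s = 0"
    by simp
  moreover obtain i where "v $ i \<noteq> 0"
    using \<open>v \<noteq> 0\<close> by (auto simp: vec_eq_iff)
  ultimately show "\<mu> \<in> {0, ?n * c}"
    using comp[of i] by auto
qed

lemma largest_eigenvalue_graph_laplacian_const_weight_le:
  fixes x :: "'n::finite \<Rightarrow> real^'d"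
  assumes "\<And>i j. i \<noteq> j \<Longrightarrow> weight_matrix f x $ i $ j = c"
  shows "largest_eigenvalue (graph_laplacian f x) \<le> max 0 (real CARD('n) * c)"
  using largest_eigenvalue_symmetric(1)[OF transpose_graph_laplacian[of f x]]
    real_eigenvalues_graph_laplacian_const_weight[OF assms] by auto

lemma largest_eigenvalue_graph_laplacian_nonneg: "0 \<le> largest_eigenvalue (graph_laplacian f y)"
  by (rule largest_eigenvalue_symmetric(3)[OF transpose_graph_laplacian
        zero_in_real_eigenvalues_graph_laplacian])

lemma norm_diff_sq_unit:
  fixes u v :: "'a::real_inner"
  assumes "norm u = 1" "norm v = 1"
  shows "(norm (u - v))\<^sup>2 = 2 - 2 * (u \<bullet> v)"
proof -
  have "u \<bullet> u = 1" "v \<bullet> v = 1"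
    using assms by (simp_all add: dot_square_norm)
  then show ?thesis
    unfolding power2_norm_eq_inner by (simp add: inner_diff_left inner_diff_right inner_commute[of v u])
qed

lemma sum_norm_diff_sq_unit_le:
  fixes y :: "'n::finite \<Rightarrow> 'a::real_inner"
  assumes "\<And>i. norm (y i) = 1"
  shows "(\<Sum>a\<in>UNIV. \<Sum>k\<in>UNIV. (norm (y a - y k))\<^sup>2) \<le> 2 * (real CARD('n))\<^sup>2"
proof -
  have "(\<Sum>a\<in>UNIV. \<Sum>k\<in>UNIV. y a \<bullet> y k) = (\<Sum>a\<in>UNIV. y a) \<bullet> (\<Sum>k\<in>UNIV. y k)"
    by (simp add: inner_sum_left inner_sum_right) (rule sum.swap)
  then have "0 \<le> (\<Sum>a\<in>UNIV. \<Sum>k\<in>UNIV. y a \<bullet> y k)"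
    by simp
  moreover have "(\<Sum>a\<in>UNIV. \<Sum>k\<in>UNIV. (norm (y a - y k))\<^sup>2)
      = 2 * (real CARD('n))\<^sup>2 - 2 * (\<Sum>a\<in>UNIV. \<Sum>k\<in>UNIV. y a \<bullet> y k)"
    unfolding norm_diff_sq_unit[OF assms assms] by (simp add: sum_subtractf sum_distrib_left power2_eq_square)
  ultimately show ?thesis
    by linarith
qed

lemma norm_diff_sq_regular_simplex:
  fixes u v :: "'a::real_inner"
  assumes "norm u = 1" "norm v = 1" "u \<bullet> v = - 1 / (m - 1)" "1 < m"
  shows "(norm (u - v))\<^sup>2 = 2 * m / (m - 1)"
  using assms by (simp add: norm_diff_sq_unit field_simps)

lemma convex_decreasing_supporting_line:
  fixes f :: "real \<Rightarrow> real"
  assumes f_diff: "f differentiable_on {a<..b}"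
    and f_decr: "\<And>s t. a < s \<Longrightarrow> s \<le> t \<Longrightarrow> t \<le> b \<Longrightarrow> f t \<le> f s"
    and f_conv: "convex_on {a<..b} f"
    and t0: "a < t0" "t0 < b"
  obtains g where "g \<le> 0" and "\<And>t. t \<in> {a<..b} \<Longrightarrow> f t0 + g * (t - t0) \<le> f t"
proof -
  have "f differentiable at t0 within {a<..b}"
    using f_diff t0 unfolding differentiable_on_def by auto
  then obtain g where g: "(f has_real_derivative g) (at t0 within {a<..b})"
    unfolding real_differentiable_def by blast
  have tangent: "g * (t - t0) \<le> f t - f t0" if "t \<in> {a<..b}" for t
    by (rule convex_on_imp_above_tangent[OF f_conv]) (use t0 that g in auto)
  have "g * (b - t0) \<le> 0"
    using tangent[of b] f_decr[of t0 b] t0 by auto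
  then have "g \<le> 0"
    using t0 by (simp add: mult_le_0_iff)
  moreover have "f t0 + g * (t - t0) \<le> f t" if "t \<in> {a<..b}" for t
    using tangent[OF that] by linarith
  ultimately show ?thesis
    using that by blast
qed

lemma sum_weights_ge_regular_simplex_weight:
  fixes f :: "real \<Rightarrow> real"
    and y :: "'n::finite \<Rightarrow> real^'d"
  assumes n3: "CARD('n) \<ge> 3"
    and y_sphere: "\<And>i. norm (y i) = 1"
    and y_inj: "inj y"
    and f_diff: "f differentiable_on {0<..4}"
    and f_decr: "\<And>a b. 0 < a \<Longrightarrow> a \<le> b \<Longrightarrow> b \<le> 4 \<Longrightarrow> f b \<le> f a"
    and f_conv: "convex_on {0<..4} f"
  shows "real CARD('n) * (real CARD('n) - 1) * f (2 * real CARD('n) / (real CARD('n) - 1))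
    \<le> (\<Sum>a\<in>UNIV. \<Sum>k\<in>UNIV. weight_matrix f y $ a $ k)"
proof -
  define n where "n = real CARD('n)"
  define d0 where "d0 = 2 * n / (n - 1)"
  have "3 \<le> n"
    using n3 by (simp add: n_def)
  then have "0 < d0" "d0 < 4" and n_d0: "n * (n - 1) * d0 = 2 * n\<^sup>2"
    by (auto simp: d0_def field_simps power2_eq_square)
  obtain g where "g \<le> 0" and support: "\<And>t. t \<in> {0<..4} \<Longrightarrow> f d0 + g * (t - d0) \<le> f t"
    using convex_decreasing_supporting_line[OF f_diff f_decr f_conv \<open>0 < d0\<close> \<open>d0 < 4\<close>] by blast
  let ?d = "\<lambda>a k. (norm (y a - y k))\<^sup>2"
  have entry: "(if a = k then 0 else f d0 - g * d0) + g * ?d a k \<le> weight_matrix f y $ a $ k" for a k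
  proof (cases "a = k")
    case False
    then have "0 < ?d a k"
      using y_inj by (simp add: inj_eq)
    moreover have "norm (y a - y k) \<le> 2"
      using norm_triangle_ineq4[of "y a" "y k"] y_sphere by simp
    then have "?d a k \<le> 4"
      using power_mono[of "norm (y a - y k)" 2 2] by simp
    ultimately have "f d0 + g * (?d a k - d0) \<le> f (?d a k)"
      by (intro support) auto
    with False show ?thesis
      by (simp add: weight_matrix_def algebra_simps)
  qed (simp add: weight_matrix_def)
  have "n * (n - 1) * f d0 \<le> n * (n - 1) * f d0 + g * ((\<Sum>a\<in>UNIV. \<Sum>k\<in>UNIV. ?d a k) - 2 * n\<^sup>2)"
    using \<open>g \<le> 0\<close> sum_norm_diff_sq_unit_le[of y, OF y_sphere] unfolding n_def
    by (simp add: mult_nonpos_nonpos)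
  also have "\<dots> = n * ((n - 1) * (f d0 - g * d0)) + g * (\<Sum>a\<in>UNIV. \<Sum>k\<in>UNIV. ?d a k)"
    by (simp only: n_d0[symmetric]) (simp add: algebra_simps)
  also have "\<dots> = (\<Sum>a\<in>UNIV. \<Sum>k\<in>UNIV. (if a = k then 0 else f d0 - g * d0) + g * ?d a k)"
    unfolding n_def by (simp add: sum.distrib sum_off_diagonal_const sum_distrib_left)
  also have "\<dots> \<le> (\<Sum>a\<in>UNIV. \<Sum>k\<in>UNIV. weight_matrix f y $ a $ k)"
    by (intro sum_mono entry)
  finally show ?thesis
    unfolding n_def d0_def .
qed

theorem proposition3p3:
  fixes f :: "real \<Rightarrow> real"
    and x :: "'n::finite \<Rightarrow> real^'d"
  assumes n3: "CARD('n) \<ge> 3"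
    and dim: "CARD('d) = CARD('n) - 1"
    and f_diff: "f differentiable_on {0<..4}"
    and f_decr: "\<And>a b. 0 < a \<Longrightarrow> a \<le> b \<Longrightarrow> b \<le> 4 \<Longrightarrow> f b \<le> f a"
    and f_conv: "convex_on {0<..4} f"
    and x_sphere: "\<And>i. norm (x i) = 1"
    and x_simplex: "\<And>i j. i \<noteq> j \<Longrightarrow> x i \<bullet> x j = - 1 / (real CARD('n) - 1)"
  shows "\<forall>y :: 'n \<Rightarrow> real^'d. (\<forall>i. norm (y i) = 1) \<and> inj y \<longrightarrow>
           largest_eigenvalue (graph_laplacian f x) \<le> largest_eigenvalue (graph_laplacian f y)"
proof (intro allI impI, elim conjE)
  fix y :: "'n \<Rightarrow> real^'d"
  assume y_sphere: "\<forall>i. norm (y i) = 1" and y_inj: "inj y"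
  define n where "n = real CARD('n)"
  define c where "c = f (2 * n / (n - 1))"
  have "1 < n"
    using n3 by (simp add: n_def)
  have simplex_weight: "weight_matrix f x $ i $ j = c" if "i \<noteq> j" for i j
    using norm_diff_sq_regular_simplex[OF x_sphere x_sphere x_simplex[OF that]] \<open>1 < n\<close> that
    by (simp add: weight_matrix_def c_def n_def)
  have "(n - 1) * (n * c) \<le> (n - 1) * largest_eigenvalue (graph_laplacian f y)"
    using sum_weights_ge_regular_simplex_weight[OF n3 _ y_inj f_diff f_decr f_conv] y_sphere
      sum_weights_le_largest_eigenvalue_graph_laplacian[of f y]
    unfolding n_def c_def by (simp add: algebra_simps)
  then have "n * c \<le> largest_eigenvalue (graph_laplacian f y)"
    using \<open>1 < n\<close> by simp
  then have "max 0 (n * c) \<le> largest_eigenvalue (graph_laplacian f y)"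
    using largest_eigenvalue_graph_laplacian_nonneg by simp
  with largest_eigenvalue_graph_laplacian_const_weight_le[OF simplex_weight]
  show "largest_eigenvalue (graph_laplacian f x) \<le> largest_eigenvalue (graph_laplacian f y)"
    unfolding n_def by linarith
qed

end
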